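(* Assume that for every $x\in V$ the functions $s\mapsto H(x,s)$ and $s\mapsto f_l(x,s)$ ($l=1,\dots,m$) are nondecreasing, and that $|H(x,s)-H(x,t)|\le|s-t|$ for all $x\in V$, $s,t\in[0,\infty)$. If $(u^1,\dots,u^m)$ and $(v^1,\dots,v^m)$ both solve the discrete system (S), then for every $l=1,\dots,m$, $$\max_{x\in V}\big(\hat{u}^l(x)-\hat{v}^l(x)\big)=\max_{\{x\in V:\ u^l(x)\le v^l(x)\}}\big(\hat{u}^l(x)-\hat{v}^l(x)\big),$$ and, symmetrically, $$\max_{x\in V}\big(\hat{v}^l(x)-\hat{u}^l(x)\big)=\max_{\{x\in V:\ v^l(x)\le u^l(x)\}}\big(\hat{v}^l(x)-\hat{u}^l(x)\big).$$
   Context: Let $G=(V,E)$ be a finite, connected, undirected graph with at least two vertices. For $x,y\in V$, $d(x,y)$ denotes the graph (shortest-path) distance, and $\deg(x)=|\{y\in V:(x,y)\in E\}|$. The boundary of $G$ is $$\partial G=\Big\{x\in V:\ \exists\, y\in V \text{ with } \tfrac{1}{\deg(x)}\textstyle\sum_{(x,z)\in E} d(z,y)<d(x,y)\Big\},$$ and the interior is $G^o=V\setminus\partial G$. For $r:V\to\mathbb{R}$, the mean value at $x$ is $\overline{r}(x)=\frac{1}{\deg(x)}\sum_{(x,y)\in E} r(y)$. Fix an integer $m\ge1$. Let $H:V\times[0,\infty)\to\mathbb{R}$ and $f_l:V\times[0,\infty)\to\mathbb{R}$ ($l=1,\dots,m$) be continuous in the second variable with $H(x,0)=0$ and $f_l(x,0)=0$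 for all $x\in V$; they are extended to negative arguments by $H(x,s)=-H(x,-s)$ and $f_l(x,s)=-f_l(x,-s)$ for $s<0$. Let $\phi^l:\partial G\to[0,\infty)$ ($l=1,\dots,m$) be boundary data satisfying $\phi^i(x)\phi^j(x)=0$ for all $x\in\partial G$ and $i\neq j$. The discrete system (S) for $(u^1,\dots,u^m)$, $u^l:V\to\mathbb{R}$, is: for every $l=1,\dots,m$, $$u^l(x)=\max\Big(H\Big(x,\ \overline{u}^l(x)-\sum_{p\neq l}\overline{u}^p(x)\Big)-f_l\big(x,u^l(x)\big),\ 0\Big)\quad (x\in G^o),\qquad u^l(x)=\phi^l(x)\quad (x\in\partial G).$$ For a vector $(u^1,\dots,u^m)$ we write $\hat{u}^l(x)=u^l(x)-\sum_{p\neq l}u^p(x)$, and similarly $\hat{v}^l$. *)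

theory Defs
  imports "HOL-Analysis.Analysis"
begin

definition graph :: "'a set \<Rightarrow> ('a \<Rightarrow> 'a \<Rightarrow> bool) \<Rightarrow> bool" where
  "graph V E \<longleftrightarrow> finite V \<and> card V \<ge> 2
     \<and> (\<forall>x y. E x y \<longrightarrow> x \<in> V \<and> y \<in> V)
     \<and> (\<forall>x y. E x y \<longrightarrow> E y x) \<and> (\<forall>x. \<not> E x x)
     \<and> (\<forall>x\<in>V. \<forall>y\<in>V. \<exists>n. (x, y) \<in> {(a, b). E a b} ^^ n)"

definition nbrs :: "'a set \<Rightarrow> ('a \<Rightarrow> 'a \<Rightarrow> bool) \<Rightarrow> 'a \<Rightarrow> 'a set" where
  "nbrs V E x = {y \<in> V. E x y}"

definition deg :: "'a set \<Rightarrow> ('a \<Rightarrow> 'a \<Rightarrow> bool) \<Rightarrow> 'a \<Rightarrow> nat" where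
  "deg V E x = card (nbrs V E x)"

definition gdist :: "('a \<Rightarrow> 'a \<Rightarrow> bool) \<Rightarrow> 'a \<Rightarrow> 'a \<Rightarrow> nat" where
  "gdist E x y = (LEAST n. (x, y) \<in> {(a, b). E a b} ^^ n)"

definition mean_val :: "'a set \<Rightarrow> ('a \<Rightarrow> 'a \<Rightarrow> bool) \<Rightarrow> ('a \<Rightarrow> real) \<Rightarrow> 'a \<Rightarrow> real" where
  "mean_val V E r x = (\<Sum>y\<in>nbrs V E x. r y) / real (deg V E x)"

definition bdry :: "'a set \<Rightarrow> ('a \<Rightarrow> 'a \<Rightarrow> bool) \<Rightarrow> 'a set" where
  "bdry V E = {x \<in> V. \<exists>y\<in>V.
      (\<Sum>z\<in>nbrs V E x. real (gdist E z y)) / real (deg V E x) < real (gdist E x y)}"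

definition interior_set :: "'a set \<Rightarrow> ('a \<Rightarrow> 'a \<Rightarrow> bool) \<Rightarrow> 'a set" where
  "interior_set V E = V - bdry V E"

definition solves_S ::
  "'a set \<Rightarrow> ('a \<Rightarrow> 'a \<Rightarrow> bool) \<Rightarrow> nat \<Rightarrow> ('a \<Rightarrow> real \<Rightarrow> real)
   \<Rightarrow> (nat \<Rightarrow> 'a \<Rightarrow> real \<Rightarrow> real) \<Rightarrow> (nat \<Rightarrow> 'a \<Rightarrow> real)
   \<Rightarrow> (nat \<Rightarrow> 'a \<Rightarrow> real) \<Rightarrow> bool" where
  "solves_S V E m H f \<phi> u \<longleftrightarrow>
     (\<forall>l\<in>{1..m}.
        (\<forall>x\<in>interior_set V E.
           u l x = max (H x (mean_val V E (u l) x - (\<Sum>p\<in>{1..m} - {l}. mean_val V E (u p) x))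
                        - f l x (u l x)) 0)
      \<and> (\<forall>x\<in>bdry V E. u l x = \<phi> l x))"

definition hat :: "nat \<Rightarrow> (nat \<Rightarrow> 'a \<Rightarrow> real) \<Rightarrow> nat \<Rightarrow> 'a \<Rightarrow> real" where
  "hat m u l x = u l x - (\<Sum>p\<in>{1..m} - {l}. u p x)"

end

theory Submission imports Defs begin

text \<open>Let \<open>w = hat u\<^sup>l - hat v\<^sup>l\<close>. Where \<open>u\<^sup>l > v\<^sup>l\<close> the vertex is interior (both solutions
equal \<open>\<phi>\<^sup>l\<close> on the boundary) and the equations of (S) are segregated: a positive component of a
solution forces all other components to vanish. Then \<open>u\<^sup>l\<close> is the only positive component of
\<open>u\<close>, and monotonicity of \<open>f\<^sub>l\<close> and \<open>H\<close> together with the 1-Lipschitz bound on \<open>H\<close> give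
\<open>w \<le> mean w\<close> there. By the discrete maximum principle the maximum of \<open>w\<close> cannot be attained only
on \<open>{u\<^sup>l > v\<^sup>l}\<close>: the maximum points would be closed under neighbours and, the graph being
connected, would contain a boundary point.\<close>

lemma odd_extension_mono:
  fixes h :: "real \<Rightarrow> real"
  assumes mono: "mono_on {0..} h" and h0: "h 0 = 0"
    and odd: "\<And>s. s < 0 \<Longrightarrow> h s = - h (- s)"
  shows "mono h"
proof (rule monoI)
  have nonneg_mono: "h s \<le> h t" if "0 \<le> s" "s \<le> t" for s t
    using mono that by (simp add: mono_on_def)
  fix s t :: real
  assume st: "s \<le> t"
  show "h s \<le> h t"
  proof (cases "0 \<le> s")
    case True
    then show ?thesis using nonneg_mono st by simp
  next
    case False
    then have hs: "h s = - h (- s)" and "0 \<le> h (- s)"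
      using odd nonneg_mono[of 0 "- s"] h0 by auto
    show ?thesis
    proof (cases "0 \<le> t")
      case True
      then have "0 \<le> h t" using nonneg_mono[of 0 t] h0 by simp
      then show ?thesis using hs \<open>0 \<le> h (- s)\<close> by linarith
    next
      case False
      then have "h t = - h (- t)" and "h (- t) \<le> h (- s)"
        using odd nonneg_mono[of "- t" "- s"] st by auto
      then show ?thesis using hs by linarith
    qed
  qed
qed

lemma odd_extension_contraction:
  fixes h :: "real \<Rightarrow> real"
  assumes h0: "h 0 = 0"
    and odd: "\<And>s. s < 0 \<Longrightarrow> h s = - h (- s)"
    and lip: "\<And>s t. 0 \<le> s \<Longrightarrow> 0 \<le> t \<Longrightarrow> \<bar>h s - h t\<bar> \<le> \<bar>s - t\<bar>"
    and ts: "t \<le> s"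
  shows "h s - h t \<le> s - t"
proof (cases "0 \<le> t")
  case True
  then show ?thesis using lip[of s t] ts by simp
next
  case False
  then have ht: "h t = - h (- t)" and "h (- t) \<le> - t"
    using odd lip[of "- t" 0] h0 by auto
  show ?thesis
  proof (cases "0 \<le> s")
    case True
    then have "h s \<le> s" using lip[of s 0] h0 by simp
    then show ?thesis using ht \<open>h (- t) \<le> - t\<close> by linarith
  next
    case False
    then have "h s = - h (- s)" and "h (- t) - h (- s) \<le> s - t"
      using odd lip[of "- t" "- s"] \<open>\<not> 0 \<le> t\<close> ts by auto
    then show ?thesis using ht by linarith
  qed
qed

definition hat_vec :: "nat set \<Rightarrow> (nat \<Rightarrow> real) \<Rightarrow> nat \<Rightarrow> real" where
  "hat_vec K g k = g k - (\<Sum>p\<in>K - {k}. g p)"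

lemma hat_eq_hat_vec: "hat m u l x = hat_vec {1..m} (\<lambda>k. u k x) l"
  by (simp add: hat_def hat_vec_def)

lemma hat_vec_add_nonpos:
  assumes K: "finite K" and k: "k \<in> K" and p: "p \<in> K" and pk: "p \<noteq> k"
    and nonneg: "\<And>q. q \<in> K \<Longrightarrow> 0 \<le> g q"
  shows "hat_vec K g k + hat_vec K g p \<le> 0"
proof -
  have "(\<Sum>q\<in>K - {k}. g q) = g p + (\<Sum>q\<in>K - {k} - {p}. g q)"
    using K p pk by (subst sum.remove[of _ p]) auto
  moreover have "(\<Sum>q\<in>K - {p}. g q) = g k + (\<Sum>q\<in>K - {k} - {p}. g q)"
    using K k pk by (subst sum.remove[of _ k]) (auto simp: Diff_insert2 [symmetric] insert_commute)
  moreover have "0 \<le> (\<Sum>q\<in>K - {k} - {p}. g q)"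
    using nonneg by (intro sum_nonneg) auto
  ultimately show ?thesis by (simp add: hat_vec_def)
qed

text \<open>The equations of (S) at one interior vertex \<open>x\<close>: \<open>h = H(x,\<cdot>)\<close>, \<open>f k = f\<^sub>k(x,\<cdot>)\<close>, and the
data \<open>\<alpha> k\<close> are the mean values of \<open>u\<^sup>k\<close> at \<open>x\<close>. Since \<open>hat_vec K \<alpha> k\<close> may be negative, \<open>h\<close> is
required to be monotone and 1-Lipschitz on all of \<open>\<real>\<close>, which holds for the odd extension.\<close>

locale segregated_system =
  fixes K :: "nat set" and h :: "real \<Rightarrow> real" and f :: "nat \<Rightarrow> real \<Rightarrow> real"
  assumes finite_K: "finite K"
    and h_mono: "mono h" and h_zero: "h 0 = 0"
    and h_contraction: "\<And>s t. t \<le> s \<Longrightarrow> h s - h t \<le> s - t"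
    and f_mono: "\<And>k. k \<in> K \<Longrightarrow> mono_on {0..} (f k)"
    and f_zero: "\<And>k. k \<in> K \<Longrightarrow> f k 0 = 0"
begin

definition solution :: "(nat \<Rightarrow> real) \<Rightarrow> (nat \<Rightarrow> real) \<Rightarrow> bool" where
  "solution \<alpha> w \<longleftrightarrow> (\<forall>k\<in>K. w k = max (h (hat_vec K \<alpha> k) - f k (w k)) 0)"

lemma f_nonneg:
  assumes "k \<in> K" and "0 \<le> s"
  shows "0 \<le> f k s"
  using mono_onD[OF f_mono[of k], of 0 s] f_zero[of k] assms by simp

lemma solution_nonneg: "solution \<alpha> w \<Longrightarrow> k \<in> K \<Longrightarrow> 0 \<le> w k"
  unfolding solution_def by (metis max.cobounded2)

lemma solution_pos_eq:
  "solution \<alpha> w \<Longrightarrow> k \<in> K \<Longrightarrow> 0 < w k \<Longrightarrow> w k = h (hat_vec K \<alpha> k) - f k (w k)"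
  unfolding solution_def by (metis max_def order_less_irrefl)

lemma solution_le_hat:
  assumes w: "solution \<alpha> w" and k: "k \<in> K" and pos: "0 < w k"
  shows "w k \<le> hat_vec K \<alpha> k"
proof -
  have le_h: "w k \<le> h (hat_vec K \<alpha> k)"
    using solution_pos_eq[OF w k pos] f_nonneg[OF k solution_nonneg[OF w k]] by linarith
  have "0 \<le> hat_vec K \<alpha> k"
  proof (rule ccontr)
    assume "\<not> 0 \<le> hat_vec K \<alpha> k"
    then have "h (hat_vec K \<alpha> k) \<le> h 0" using h_mono by (simp add: monoD)
    then show False using le_h pos h_zero by linarith
  qed
  then show ?thesis using le_h h_contraction[of 0 "hat_vec K \<alpha> k"] h_zero by simp
qed

lemma solution_segregated:
  assumes \<alpha>: "\<And>q. q \<in> K \<Longrightarrow> 0 \<le> \<alpha> q" and w: "solution \<alpha> w"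
    and k: "k \<in> K" and p: "p \<in> K" and pk: "p \<noteq> k" and pos: "0 < w k"
  shows "w p = 0"
proof -
  have "hat_vec K \<alpha> p \<le> 0"
    using hat_vec_add_nonpos[where g = \<alpha>, OF finite_K k p pk \<alpha>] solution_le_hat[OF w k pos] pos by linarith
  then have "h (hat_vec K \<alpha> p) \<le> 0" using h_mono h_zero by (metis monoD)
  moreover have "0 \<le> f p (w p)" using f_nonneg[OF p] solution_nonneg[OF w p] .
  ultimately show ?thesis using w p unfolding solution_def by (metis max.absorb2 diff_le_0_iff_le order_trans)
qed

lemma solution_hat_eq:
  assumes \<alpha>: "\<And>q. q \<in> K \<Longrightarrow> 0 \<le> \<alpha> q" and w: "solution \<alpha> w"
    and k: "k \<in> K" and pos: "0 < w k"
  shows "hat_vec K w k = w k"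
  using solution_segregated[OF \<alpha> w k _ _ pos] by (simp add: hat_vec_def)

lemma solution_hat_diff_le:
  assumes l: "l \<in> K"
    and \<alpha>: "\<And>q. q \<in> K \<Longrightarrow> 0 \<le> \<alpha> q" and \<beta>: "\<And>q. q \<in> K \<Longrightarrow> 0 \<le> \<beta> q"
    and u: "solution \<alpha> u" and v: "solution \<beta> v" and gt: "v l < u l"
  shows "hat_vec K u l - hat_vec K v l \<le> hat_vec K \<alpha> l - hat_vec K \<beta> l"
proof -
  have ul: "0 < u l" using solution_nonneg[OF v l] gt by linarith
  have "h (hat_vec K \<beta> l) - f l (v l) \<le> v l"
    using v l unfolding solution_def by (metis max.cobounded1)
  moreover have "f l (v l) \<le> f l (u l)"
    using f_mono[OF l] solution_nonneg[OF v l] gt by (auto simp: mono_on_def)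
  ultimately have diff_h: "u l - v l \<le> h (hat_vec K \<alpha> l) - h (hat_vec K \<beta> l)"
    using solution_pos_eq[OF u l ul] by linarith
  have "hat_vec K \<beta> l \<le> hat_vec K \<alpha> l"
  proof (rule ccontr)
    assume "\<not> ?thesis"
    then have "h (hat_vec K \<alpha> l) \<le> h (hat_vec K \<beta> l)" using h_mono by (simp add: monoD)
    then show False using diff_h gt by linarith
  qed
  then have diff: "u l - v l \<le> hat_vec K \<alpha> l - hat_vec K \<beta> l"
    using diff_h h_contraction by (smt (verit))
  have hat_u: "hat_vec K u l = u l" using solution_hat_eq[OF \<alpha> u l ul] .
  show ?thesis
  proof (cases "\<exists>p\<in>K - {l}. 0 < v p")
    case False
    then have "\<forall>p\<in>K - {l}. v p = 0" using solution_nonneg[OF v] by force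
    then have "hat_vec K v l = v l" by (simp add: hat_vec_def)
    then show ?thesis using hat_u diff by simp
  next
    case True
    then obtain p where p: "p \<in> K" "p \<noteq> l" and vp: "0 < v p" by blast
    have others: "\<forall>q\<in>K - {p}. v q = 0"
      using solution_segregated[OF \<beta> v p(1) _ _ vp] by blast
    have "(\<Sum>q\<in>K - {l}. v q) = v p + (\<Sum>q\<in>K - {l} - {p}. v q)"
      using finite_K p by (subst sum.remove[of _ p]) auto
    also have "\<dots> = v p" using others by simp
    finally have hat_v: "hat_vec K v l = - v p"
      using others p l by (simp add: hat_vec_def)
    have "u l \<le> hat_vec K \<alpha> l" using solution_le_hat[OF u l ul] .
    moreover have "v p \<le> hat_vec K \<beta> p" using solution_le_hat[OF v p(1) vp] .
    moreover have "hat_vec K \<beta> l + hat_vec K \<beta> p \<le> 0"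
      using hat_vec_add_nonpos[where g = \<beta>, OF finite_K l p(1) p(2) \<beta>] .
    ultimately show ?thesis using hat_u hat_v by linarith
  qed
qed

end

lemma graph_reach_gdist:
  assumes G: "graph V E" and x: "x \<in> V" and y: "y \<in> V"
  shows "(x, y) \<in> {(a, b). E a b} ^^ gdist E x y"
proof -
  have "\<exists>n. (x, y) \<in> {(a, b). E a b} ^^ n" using G x y unfolding graph_def by blast
  then show ?thesis unfolding gdist_def by (rule LeastI_ex)
qed

lemma graph_gdist_pos:
  assumes G: "graph V E" and x: "x \<in> V" and y: "y \<in> V" and xy: "x \<noteq> y"
  shows "0 < gdist E x y"
  using graph_reach_gdist[OF G x y] xy by (cases "gdist E x y") auto

lemma graph_ex_other_vertex:
  assumes G: "graph V E" and x: "x \<in> V"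
  shows "\<exists>y\<in>V. y \<noteq> x"
proof -
  have "finite V" and "2 \<le> card V" using G unfolding graph_def by auto
  then have "\<not> V \<subseteq> {x}" using card_mono[of "{x}" V] by auto
  then show ?thesis by auto
qed

lemma graph_finite_nbrs: "graph V E \<Longrightarrow> finite (nbrs V E x)"
  unfolding graph_def nbrs_def by auto

lemma graph_nbrs_iff: "graph V E \<Longrightarrow> y \<in> nbrs V E x \<longleftrightarrow> E x y"
  unfolding graph_def nbrs_def by auto

lemma graph_deg_pos:
  assumes G: "graph V E" and x: "x \<in> V"
  shows "0 < deg V E x"
proof -
  obtain y where y: "y \<in> V" "y \<noteq> x" using graph_ex_other_vertex[OF G x] by blast
  then obtain n where "(x, y) \<in> {(a, b). E a b} ^^ Suc n"
    using graph_reach_gdist[OF G x] graph_gdist_pos[OF G x] by (metis gr0_conv_Suc)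
  then obtain z where "E x z" using relpow_Suc_D2 by fastforce
  then show ?thesis
    using graph_finite_nbrs[OF G] graph_nbrs_iff[OF G] unfolding deg_def by (auto simp: card_gt_0_iff)
qed

text \<open>A pair at maximal distance \<open>D\<close> exhibits a boundary point: the neighbour of \<open>x\<close> on a
shortest path to \<open>y\<close> is at distance \<open>< D\<close> from \<open>y\<close>, all others at distance \<open>\<le> D\<close>.\<close>

lemma graph_bdry_nonempty:
  assumes G: "graph V E"
  shows "bdry V E \<noteq> {}"
proof -
  have fin: "finite ((\<lambda>(a, b). gdist E a b) ` (V \<times> V))" and ne: "V \<noteq> {}"
    using G unfolding graph_def by auto
  define D where "D = Max ((\<lambda>(a, b). gdist E a b) ` (V \<times> V))"
  obtain x y where xy: "x \<in> V" "y \<in> V" "gdist E x y = D"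
    using Max_in[OF fin] ne unfolding D_def by fastforce
  have le_D: "gdist E a b \<le> D" if "a \<in> V" "b \<in> V" for a b
    unfolding D_def using fin that by (intro Max_ge) auto
  obtain a where a: "a \<in> V" using ne by auto
  obtain b where "b \<in> V" "b \<noteq> a" using graph_ex_other_vertex[OF G a] by blast
  then have "0 < D" using graph_gdist_pos[OF G a] le_D[OF a] by (metis order_less_le_trans)
  then obtain n where n: "D = Suc n" using gr0_conv_Suc by blast
  then obtain z where z: "E x z" "(z, y) \<in> {(a, b). E a b} ^^ n"
    using graph_reach_gdist[OF G xy(1,2)] xy(3) relpow_Suc_D2 by fastforce
  have "gdist E z y \<le> n" unfolding gdist_def using z(2) by (rule Least_le)
  moreover have "z \<in> nbrs V E x" using z(1) graph_nbrs_iff[OF G] by simp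
  moreover have "\<forall>w\<in>nbrs V E x. gdist E w y \<le> D" using le_D xy(2) by (simp add: nbrs_def)
  ultimately have "(\<Sum>w\<in>nbrs V E x. real (gdist E w y)) < (\<Sum>w\<in>nbrs V E x. real D)"
    using n graph_finite_nbrs[OF G] by (intro sum_strict_mono_ex1) force+
  also have "\<dots> = real (deg V E x) * real D" unfolding deg_def by simp
  finally have "x \<in> bdry V E"
    using graph_deg_pos[OF G xy(1)] xy unfolding bdry_def by (auto simp: divide_less_eq mult.commute)
  then show ?thesis by blast
qed

lemma mean_val_diff: "mean_val V E (\<lambda>y. a y - b y) x = mean_val V E a x - mean_val V E b x"
  unfolding mean_val_def by (simp add: sum_subtractf diff_divide_distrib)

lemma mean_val_hat:
  "mean_val V E (hat m u l) x = hat_vec {1..m} (\<lambda>k. mean_val V E (u k) x) l"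
proof -
  have "(\<Sum>y\<in>nbrs V E x. \<Sum>p\<in>{1..m} - {l}. u p y) = (\<Sum>p\<in>{1..m} - {l}. \<Sum>y\<in>nbrs V E x. u p y)"
    by (rule sum.swap)
  then show ?thesis unfolding mean_val_def hat_def hat_vec_def
    by (simp add: sum_subtractf sum_divide_distrib[symmetric] diff_divide_distrib)
qed

lemma mean_val_ge_max_imp_nbrs_eq:
  assumes G: "graph V E" and x: "x \<in> V"
    and le_c: "\<And>z. z \<in> nbrs V E x \<Longrightarrow> w z \<le> c" and mean: "c \<le> mean_val V E w x"
    and y: "y \<in> nbrs V E x"
  shows "w y = c"
proof (rule ccontr)
  assume "w y \<noteq> c"
  then have "(\<Sum>z\<in>nbrs V E x. w z) < (\<Sum>z\<in>nbrs V E x. c)"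
    using le_c y graph_finite_nbrs[OF G] by (intro sum_strict_mono_ex1) (auto simp: order_less_le)
  also have "\<dots> = c * real (deg V E x)" unfolding deg_def by simp
  finally show False
    using mean graph_deg_pos[OF G x] unfolding mean_val_def by (simp add: le_divide_eq)
qed

lemma discrete_max_principle:
  fixes w :: "'a \<Rightarrow> real"
  assumes G: "graph V E"
    and sub_mean: "\<And>x. x \<in> V \<Longrightarrow> \<not> P x \<Longrightarrow> x \<in> interior_set V E \<and> w x \<le> mean_val V E w x"
  shows "Max (w ` V) = Max (w ` {x \<in> V. P x})"
proof -
  define M where "M = Max (w ` V)"
  have fin: "finite V" and "V \<noteq> {}" using G unfolding graph_def by auto
  then have "M \<in> w ` V" unfolding M_def by (intro Max_in) auto
  then obtain x0 where x0: "x0 \<in> V" "w x0 = M" by blast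
  have le_M: "\<And>y. y \<in> V \<Longrightarrow> w y \<le> M" unfolding M_def using fin by simp
  have "\<exists>x\<in>V. P x \<and> w x = M"
  proof (rule ccontr)
    assume no_P: "\<not> ?thesis"
    let ?R = "{(a, b). E a b}"
    have nbr_max: "y \<in> V \<and> w y = M" if x: "x \<in> V" "w x = M" and xy: "E x y" for x y
    proof
      have y: "y \<in> nbrs V E x" using xy graph_nbrs_iff[OF G] by simp
      then show "y \<in> V" by (simp add: nbrs_def)
      have "\<not> P x" using no_P x by blast
      then have "M \<le> mean_val V E w x" using sub_mean[OF x(1)] x(2) by simp
      moreover have "\<And>z. z \<in> nbrs V E x \<Longrightarrow> w z \<le> M" using le_M by (simp add: nbrs_def)
      ultimately show "w y = M" using mean_val_ge_max_imp_nbrs_eq[OF G x(1) _ _ y] by blast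
    qed
    have reach: "y \<in> V \<and> w y = M" if "(x0, y) \<in> ?R\<^sup>*" for y
      using that
    proof (induction rule: rtrancl_induct)
      case base
      then show ?case using x0 by simp
    next
      case (step y z)
      then show ?case using nbr_max by blast
    qed
    obtain b where b: "b \<in> bdry V E" using graph_bdry_nonempty[OF G] by blast
    then have bV: "b \<in> V" by (simp add: bdry_def)
    have "(x0, b) \<in> ?R\<^sup>*" using graph_reach_gdist[OF G x0(1) bV] by (rule relpow_imp_rtrancl)
    then have "w b = M" using reach by blast
    then show False using no_P sub_mean bV b by (auto simp: interior_set_def)
  qed
  then obtain xP where xP: "xP \<in> V" "P xP" "w xP = M" by blast
  have "Max (w ` {x \<in> V. P x}) \<le> M" unfolding M_def using fin xP by (intro Max_mono) auto
  moreover have "M \<le> Max (w ` {x \<in> V. P x})" using xP fin by (intro Max_ge) auto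
  ultimately show ?thesis unfolding M_def by simp
qed

lemma solves_S_nonneg:
  assumes sol: "solves_S V E m H f \<phi> u" and k: "k \<in> {1..m}" and x: "x \<in> V"
    and phi_nonneg: "\<And>k x. k \<in> {1..m} \<Longrightarrow> x \<in> bdry V E \<Longrightarrow> \<phi> k x \<ge> 0"
  shows "0 \<le> u k x"
proof (cases "x \<in> bdry V E")
  case True
  then show ?thesis using sol k phi_nonneg unfolding solves_S_def by auto
next
  case False
  then have "x \<in> interior_set V E" using x by (simp add: interior_set_def)
  then show ?thesis using sol k unfolding solves_S_def by (metis max.cobounded2)
qed

lemma max_hat_diff_attained:
  fixes V :: "'a set" and E :: "'a \<Rightarrow> 'a \<Rightarrow> bool" and m :: nat
    and H :: "'a \<Rightarrow> real \<Rightarrow> real" and f :: "nat \<Rightarrow> 'a \<Rightarrow> real \<Rightarrow> real"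
    and \<phi> u v :: "nat \<Rightarrow> 'a \<Rightarrow> real" and l :: nat
  assumes G: "graph V E"
    and H0: "\<And>x. x \<in> V \<Longrightarrow> H x 0 = 0"
    and f0: "\<And>k x. k \<in> {1..m} \<Longrightarrow> x \<in> V \<Longrightarrow> f k x 0 = 0"
    and H_odd: "\<And>x s. x \<in> V \<Longrightarrow> s < 0 \<Longrightarrow> H x s = - H x (- s)"
    and phi_nonneg: "\<And>k x. k \<in> {1..m} \<Longrightarrow> x \<in> bdry V E \<Longrightarrow> \<phi> k x \<ge> 0"
    and H_mono: "\<And>x. x \<in> V \<Longrightarrow> mono_on {0..} (H x)"
    and f_mono: "\<And>k x. k \<in> {1..m} \<Longrightarrow> x \<in> V \<Longrightarrow> mono_on {0..} (f k x)"
    and H_lip: "\<And>x s t. x \<in> V \<Longrightarrow> s \<ge> 0 \<Longrightarrow> t \<ge> 0 \<Longrightarrow> \<bar>H x s - H x t\<bar> \<le> \<bar>s - t\<bar>"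
    and u_sol: "solves_S V E m H f \<phi> u"
    and v_sol: "solves_S V E m H f \<phi> v"
    and l: "l \<in> {1..m}"
  shows "Max ((\<lambda>x. hat m u l x - hat m v l x) ` V)
           = Max ((\<lambda>x. hat m u l x - hat m v l x) ` {x \<in> V. u l x \<le> v l x})"
proof (rule discrete_max_principle[OF G])
  fix x assume x: "x \<in> V" and gt: "\<not> u l x \<le> v l x"
  have "x \<notin> bdry V E" using u_sol v_sol l gt unfolding solves_S_def by auto
  then have int: "x \<in> interior_set V E" using x by (simp add: interior_set_def)
  interpret segregated_system "{1..m}" "H x" "\<lambda>k. f k x"
    using odd_extension_mono[OF H_mono H0 H_odd] odd_extension_contraction[OF H0 H_odd H_lip]
      H0 f_mono f0 x by unfold_locales auto
  have pointwise: "solution (\<lambda>k. mean_val V E (w k) x) (\<lambda>k. w k x)"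
    if "solves_S V E m H f \<phi> w" for w
    using that int unfolding solves_S_def solution_def hat_vec_def by auto
  have mean_nonneg: "0 \<le> mean_val V E (w k) x"
    if "solves_S V E m H f \<phi> w" "k \<in> {1..m}" for w k
    unfolding mean_val_def using solves_S_nonneg[OF that _ phi_nonneg]
    by (intro divide_nonneg_nonneg sum_nonneg) (auto simp: nbrs_def)
  have "hat m u l x - hat m v l x
        \<le> mean_val V E (hat m u l) x - mean_val V E (hat m v l) x"
    unfolding hat_eq_hat_vec mean_val_hat
    using solution_hat_diff_le[OF l mean_nonneg[OF u_sol] mean_nonneg[OF v_sol]
        pointwise[OF u_sol] pointwise[OF v_sol]] gt by simp
  then show "x \<in> interior_set V E \<and>
      hat m u l x - hat m v l x \<le> mean_val V E (\<lambda>x. hat m u l x - hat m v l x) x"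
    using int by (simp add: mean_val_diff)
qed

theorem lemma3:
  fixes V :: "'a set" and E :: "'a \<Rightarrow> 'a \<Rightarrow> bool" and m :: nat
    and H :: "'a \<Rightarrow> real \<Rightarrow> real" and f :: "nat \<Rightarrow> 'a \<Rightarrow> real \<Rightarrow> real"
    and \<phi> u v :: "nat \<Rightarrow> 'a \<Rightarrow> real" and l :: nat
  assumes G: "graph V E"
    and m: "m \<ge> 1"
    and H_cont: "\<And>x. x \<in> V \<Longrightarrow> continuous_on {0..} (H x)"
    and f_cont: "\<And>k x. k \<in> {1..m} \<Longrightarrow> x \<in> V \<Longrightarrow> continuous_on {0..} (f k x)"
    and H0: "\<And>x. x \<in> V \<Longrightarrow> H x 0 = 0"
    and f0: "\<And>k x. k \<in> {1..m} \<Longrightarrow> x \<in> V \<Longrightarrow> f k x 0 = 0"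
    and H_odd: "\<And>x s. x \<in> V \<Longrightarrow> s < 0 \<Longrightarrow> H x s = - H x (- s)"
    and f_odd: "\<And>k x s. k \<in> {1..m} \<Longrightarrow> x \<in> V \<Longrightarrow> s < 0 \<Longrightarrow> f k x s = - f k x (- s)"
    and phi_nonneg: "\<And>k x. k \<in> {1..m} \<Longrightarrow> x \<in> bdry V E \<Longrightarrow> \<phi> k x \<ge> 0"
    and phi_disj: "\<And>i j x. i \<in> {1..m} \<Longrightarrow> j \<in> {1..m} \<Longrightarrow> i \<noteq> j \<Longrightarrow> x \<in> bdry V E
                     \<Longrightarrow> \<phi> i x * \<phi> j x = 0"
    and H_mono: "\<And>x. x \<in> V \<Longrightarrow> mono_on {0..} (H x)"
    and f_mono: "\<And>k x. k \<in> {1..m} \<Longrightarrow> x \<in> V \<Longrightarrow> mono_on {0..} (f k x)"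
    and H_lip: "\<And>x s t. x \<in> V \<Longrightarrow> s \<ge> 0 \<Longrightarrow> t \<ge> 0 \<Longrightarrow> \<bar>H x s - H x t\<bar> \<le> \<bar>s - t\<bar>"
    and u_sol: "solves_S V E m H f \<phi> u"
    and v_sol: "solves_S V E m H f \<phi> v"
    and l: "l \<in> {1..m}"
  shows "Max ((\<lambda>x. hat m u l x - hat m v l x) ` V)
           = Max ((\<lambda>x. hat m u l x - hat m v l x) ` {x \<in> V. u l x \<le> v l x})
       \<and> Max ((\<lambda>x. hat m v l x - hat m u l x) ` V)
           = Max ((\<lambda>x. hat m v l x - hat m u l x) ` {x \<in> V. v l x \<le> u l x})"
  using max_hat_diff_attained[OF G H0 f0 H_odd phi_nonneg H_mono f_mono H_lip u_sol v_sol l]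
    max_hat_diff_attained[OF G H0 f0 H_odd phi_nonneg H_mono f_mono H_lip v_sol u_sol l]
  by blast

end
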